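(* Let $z_1,\dots,z_m\in\widehat{\mathbb{C}}=\mathbb{C}\cup\{\infty\}$ and let $f$ be a harmonic mapping on $\widehat{\mathbb{C}}\setminus\{z_1,\dots,z_m\}$ with a pole at each $z_j$, such that at each $z_j$ the principal parts (the terms with negative powers) of both series in the local decomposition of $f$ near $z_j$ have only finitely many nonzero terms. Then $$f(z)=r(z)+\overline{s(z)}+\sum_{j=1}^m 2A_j\log|z-z_j|,$$ where $A_1,\dots,A_m\in\mathbb{C}$ and $r,s$ are rational functions which can have poles only at $z_1,\dots,z_m$; if some $z_j=\infty$, the term $\log|z-z_j|$ is replaced by $\log|z|$. In particular, if $f$ is harmonic on all of $\widehat{\mathbb{C}}$, then $f$ is constant.
   Context: A harmonic mapping on an open set $\Omega\subseteq\widehat{\mathbb{C}}$ is a complex-valued function $f$ with $\Delta f=4\partial_{\bar z}\partial_z f=0$, where $\partial_z=\frac12(\partial_x-i\partial_y)$, $\partial_{\bar z}=\frac12(\partial_x+i\partial_y)$ are the Wirtinger derivatives; harmonicity at $\infty$ means $z\mapsto f(1/z)$ is harmonic near $0$. If $f$ is harmonic in a punctured disk $0<|z-z_0|<r$, it has a local decomposition $f(z)=\sum_{k=-\infty}^{\infty}a_k(z-z_0)^k+\overline{\sum_{k=-\infty}^{\infty}b_k(z-z_0)^k}+2A\log|z-z_0|$ with $A\in\mathbb{C}$ (analogously near $\infty$ in powers of $z$ with $\log|z|$). The point $z_0$ is a pole of $f$ if $\lim_{z\to z_0}f(z)=\infty$. *)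

theory Defs
  imports "HOL-Analysis.Analysis" "HOL-Computational_Algebra.Polynomial"
begin

definition pdx :: "(complex \<Rightarrow> complex) \<Rightarrow> complex \<Rightarrow> complex" where
  "pdx f z = vector_derivative (\<lambda>t::real. f (z + of_real t)) (at 0)"

definition pdy :: "(complex \<Rightarrow> complex) \<Rightarrow> complex \<Rightarrow> complex" where
  "pdy f z = vector_derivative (\<lambda>t::real. f (z + \<i> * of_real t)) (at 0)"

definition harmonic_on :: "(complex \<Rightarrow> complex) \<Rightarrow> complex set \<Rightarrow> bool" where
  "harmonic_on f S \<longleftrightarrow> open S \<and>
     (\<forall>z\<in>S. f differentiable (at z) \<and> pdx f differentiable (at z) \<and> pdy f differentiable (at z)) \<and>
     continuous_on S (pdx (pdx f)) \<and> continuous_on S (pdy (pdy f)) \<and>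
     continuous_on S (pdx (pdy f)) \<and> continuous_on S (pdy (pdx f)) \<and>
     (\<forall>z\<in>S. pdx (pdx f) z + pdy (pdy f) z = 0)"

definition harmonic_at_infinity :: "(complex \<Rightarrow> complex) \<Rightarrow> bool" where
  "harmonic_at_infinity f \<longleftrightarrow>
     (\<exists>e>0. \<exists>g. harmonic_on g (ball 0 e) \<and> (\<forall>w. 0 < norm w \<and> norm w < e \<longrightarrow> g w = f (1 / w)))"

definition finite_principal_parts_at :: "(complex \<Rightarrow> complex) \<Rightarrow> complex \<Rightarrow> bool" where
  "finite_principal_parts_at f z0 \<longleftrightarrow>
     (\<exists>r>0. \<exists>a b :: int \<Rightarrow> complex. \<exists>A :: complex.
        finite {k. k < 0 \<and> a k \<noteq> 0} \<and> finite {k. k < 0 \<and> b k \<noteq> 0} \<and>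
        (\<forall>z. 0 < dist z z0 \<and> dist z z0 < r \<longrightarrow>
            (\<lambda>k. a k * (z - z0) powi k) summable_on UNIV \<and>
            (\<lambda>k. b k * (z - z0) powi k) summable_on UNIV \<and>
            f z = (\<Sum>\<^sub>\<infinity>k. a k * (z - z0) powi k) + cnj (\<Sum>\<^sub>\<infinity>k. b k * (z - z0) powi k)
                  + 2 * A * of_real (ln (cmod (z - z0)))))"

text \<open>Same at infinity, in powers of z with log|z|; the principal part at infinity
  consists of the terms with negative powers of the local coordinate 1/z, i.e.
  positive powers of z.\<close>
definition finite_principal_parts_at_infinity :: "(complex \<Rightarrow> complex) \<Rightarrow> bool" where
  "finite_principal_parts_at_infinity f \<longleftrightarrow>
     (\<exists>R>0. \<exists>a b :: int \<Rightarrow> complex. \<exists>A :: complex.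
        finite {k. k > 0 \<and> a k \<noteq> 0} \<and> finite {k. k > 0 \<and> b k \<noteq> 0} \<and>
        (\<forall>z. norm z > R \<longrightarrow>
            (\<lambda>k. a k * z powi k) summable_on UNIV \<and>
            (\<lambda>k. b k * z powi k) summable_on UNIV \<and>
            f z = (\<Sum>\<^sub>\<infinity>k. a k * z powi k) + cnj (\<Sum>\<^sub>\<infinity>k. b k * z powi k)
                  + 2 * A * of_real (ln (cmod z))))"

text \<open>r is a rational function p/q whose poles (in the Riemann sphere) lie among the
  finite points Z and, if inf_pole holds, the point infinity.\<close>
definition rational_with_poles_in :: "(complex \<Rightarrow> complex) \<Rightarrow> complex set \<Rightarrow> bool \<Rightarrow> bool" where
  "rational_with_poles_in r Z inf_pole \<longleftrightarrow>
     (\<exists>p q :: complex poly. q \<noteq> 0 \<and> (\<forall>z. poly q z = 0 \<longrightarrow> z \<in> Z) \<and>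
        (\<not> inf_pole \<longrightarrow> degree p \<le> degree q) \<and>
        (\<forall>z. z \<notin> Z \<longrightarrow> r z = poly p z / poly q z))"

end

(*
  The Wirtinger derivative f_z of a harmonic map is holomorphic (by the symmetry of the
  mixed second partial derivatives), and so is the conjugate of f_zbar. Near a pole z_j the
  local decomposition shows that f_z minus the derivative of its principal part minus
  A_j / (z - z_j) has a removable singularity; near infinity f_z minus the derivative of a
  polynomial tends to 0. By Liouville's theorem, f_z = r' + sum_j A_j / (z - z_j) off the
  poles with r rational, and likewise conj f_zbar = s' + sum_j conj A_j / (z - z_j). Hence
  f - r - conj s - sum_j 2 A_j log|z - z_j| has vanishing derivative on the connected
  complement of the poles and is constant. Without poles, r and s are rational functions
  without poles, hence constant.
*)
theory Submission
  imports Defs "HOL-Complex_Analysis.Complex_Analysis"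
begin

section \<open>Wirtinger derivatives and symmetry of mixed partial derivatives\<close>

definition dz :: "(complex \<Rightarrow> complex) \<Rightarrow> complex \<Rightarrow> complex" where
  "dz f z = (pdx f z - \<i> * pdy f z) / 2"

definition dzbar :: "(complex \<Rightarrow> complex) \<Rightarrow> complex \<Rightarrow> complex" where
  "dzbar f z = (pdx f z + \<i> * pdy f z) / 2"

lemma has_vector_derivative_along_line:
  assumes "(f has_derivative D) (at (w + of_real s * h))"
  shows "((\<lambda>s::real. f (w + of_real s * h)) has_vector_derivative D h) (at s within T)"
proof -
  have line: "\<And>s. w + of_real s * h = w + s *\<^sub>R h" by (simp add: scaleR_conv_of_real)
  have "((\<lambda>s::real. w + s *\<^sub>R h) has_derivative (\<lambda>t. t *\<^sub>R h)) (at s within T)"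
    by (auto intro!: derivative_eq_intros)
  from has_derivative_compose[OF this assms[unfolded line]]
  have "((\<lambda>s::real. f (w + s *\<^sub>R h)) has_derivative (\<lambda>t. D (t *\<^sub>R h))) (at s within T)"
    by (simp add: o_def)
  then show ?thesis
    using has_derivative_linear[OF assms] by (simp add: has_vector_derivative_def line linear_scale)
qed

lemma has_derivative_imp_pdx_pdy:
  assumes "(f has_derivative D) (at z)"
  shows "pdx f z = D 1" "pdy f z = D \<i>"
proof -
  have "((\<lambda>t::real. f (z + of_real t * h)) has_vector_derivative D h) (at 0)" for h
    using has_vector_derivative_along_line[of f D z 0 h UNIV] assms by simp
  from this[of 1] this[of \<i>] show "pdx f z = D 1" "pdy f z = D \<i>"
    unfolding pdx_def pdy_def by (simp_all add: vector_derivative_at mult.commute)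
qed

lemma linear_complex_eq:
  assumes "linear (D :: complex \<Rightarrow> complex)"
  shows "D v = of_real (Re v) * D 1 + of_real (Im v) * D \<i>"
proof -
  have "v = Re v *\<^sub>R 1 + Im v *\<^sub>R \<i>" by (simp add: complex_eq_iff)
  then have "D v = D (Re v *\<^sub>R 1 + Im v *\<^sub>R \<i>)" by (rule arg_cong)
  also have "\<dots> = Re v *\<^sub>R D 1 + Im v *\<^sub>R D \<i>"
    using assms by (simp add: linear_add linear_scale)
  finally show ?thesis by (simp add: scaleR_conv_of_real)
qed

lemma has_derivative_pdx_pdy:
  assumes "f differentiable (at z)"
  shows "(f has_derivative (\<lambda>v. of_real (Re v) * pdx f z + of_real (Im v) * pdy f z)) (at z)"
proof -
  obtain D where D: "(f has_derivative D) (at z)" using assms differentiable_def by blast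
  have "D = (\<lambda>v. of_real (Re v) * pdx f z + of_real (Im v) * pdy f z)"
  proof
    fix v
    show "D v = of_real (Re v) * pdx f z + of_real (Im v) * pdy f z"
      using linear_complex_eq[OF has_derivative_linear[OF D], of v] has_derivative_imp_pdx_pdy[OF D]
      by simp
  qed
  then show ?thesis using D by simp
qed

lemma has_derivative_wirtinger:
  assumes "f differentiable (at z)"
  shows "(f has_derivative (\<lambda>v. dz f z * v + dzbar f z * cnj v)) (at z)"
proof -
  have "of_real (Re v) * pdx f z + of_real (Im v) * pdy f z = dz f z * v + dzbar f z * cnj v" for v
    by (simp add: dz_def dzbar_def complex_eq_iff field_simps)
  then show ?thesis using has_derivative_pdx_pdy[OF assms] by simp
qed

lemma wirtinger_eqI:
  assumes "(f has_derivative (\<lambda>v. a * v + b * cnj v)) (at z)"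
  shows "dz f z = a" "dzbar f z = b"
  using has_derivative_imp_pdx_pdy[OF assms] by (simp_all add: dz_def dzbar_def complex_eq_iff)

(* Mean value theorem for s \<mapsto> f (z + t k + s h) - f (z + s h), whose derivative
   G (z + t k + s h) - G (z + s h) equals t L k up to the linearization error of G at z. *)
lemma second_difference_estimate:
  fixes f G L :: "complex \<Rightarrow> complex" and t e :: real
  assumes h: "norm h = 1" and k: "norm k = 1" and L: "linear L" and e: "e \<ge> 0"
    and Df: "\<And>w. norm (w - z) \<le> 2 * \<bar>t\<bar> \<Longrightarrow> (f has_derivative Df w) (at w) \<and> Df w h = G w"
    and approx: "\<And>y. norm (y - z) \<le> 2 * \<bar>t\<bar> \<Longrightarrow> norm (G y - G z - L (y - z)) \<le> e * norm (y - z)"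
  shows "norm (f (z + of_real t * k + of_real t * h) - f (z + of_real t * h) - f (z + of_real t * k) + f z
           - of_real (t^2) * L k) \<le> 5 * e * t^2"
proof -
  define E where "E y = G y - G z - L (y - z)" for y
  define w where "w = z + of_real t * k"
  define \<phi> where "\<phi> s = f (w + of_real s * h) - f (z + of_real s * h)" for s :: real
  define \<phi>' where "\<phi>' s = G (w + of_real s * h) - G (z + of_real s * h)" for s :: real
  have E: "norm (E y) \<le> e * r" if "norm (y - z) \<le> r" "r \<le> 2 * \<bar>t\<bar>" for y r
    using approx[of y] that e unfolding E_def by (meson mult_left_mono order_trans)
  have near_w: "norm (w + of_real s * h - z) \<le> 2 * \<bar>t\<bar>"
    and near_z: "norm (z + of_real s * h - z) \<le> \<bar>t\<bar>" if "\<bar>s\<bar> \<le> \<bar>t\<bar>" for s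
  proof -
    have "norm (w + of_real s * h - z) \<le> norm (of_real t * k) + norm (of_real s * h)"
      unfolding w_def by (metis add_diff_cancel_left' norm_triangle_ineq add.assoc)
    then show "norm (w + of_real s * h - z) \<le> 2 * \<bar>t\<bar>" using that h k by (simp add: norm_mult)
    show "norm (z + of_real s * h - z) \<le> \<bar>t\<bar>" using that h by (simp add: norm_mult)
  qed
  have w: "norm (w - z) \<le> \<bar>t\<bar>" using k by (simp add: w_def norm_mult)
  have segment: "\<bar>s\<bar> \<le> \<bar>t\<bar>" if "s \<in> closed_segment 0 t" for s
    using that by (auto simp: closed_segment_eq_real_ivl split: if_splits)
  have along: "((\<lambda>s. f (y + of_real s * h)) has_vector_derivative G (y + of_real s * h)) (at s within T)"
    if "norm (y + of_real s * h - z) \<le> 2 * \<bar>t\<bar>" for y s T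
    using Df[OF that] has_vector_derivative_along_line by metis
  have \<phi>': "(\<phi> has_vector_derivative \<phi>' s) (at s within closed_segment 0 t)"
    if "s \<in> closed_segment 0 t" for s
    unfolding \<phi>_def \<phi>'_def using near_w[OF segment[OF that]] near_z[OF segment[OF that]]
    by (intro has_vector_derivative_diff along) auto
  have "\<phi>' s - \<phi>' 0 = E (w + of_real s * h) - E (z + of_real s * h) - E w" for s
  proof -
    have "L (w + of_real s * h - z) - L (z + of_real s * h - z) - L (w - z)
          = L ((w + of_real s * h - z) - (z + of_real s * h - z) - (w - z))"
      by (simp only: linear_diff[OF L])
    also have "\<dots> = 0" using linear_0[OF L] by simp
    finally show ?thesis unfolding \<phi>'_def E_def by (simp add: algebra_simps)
  qed
  then have "norm (\<phi>' s - \<phi>' 0) \<le> 4 * e * \<bar>t\<bar>" if "s \<in> closed_segment 0 t" for s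
    using E[OF near_w[OF segment[OF that]]] E[OF near_z[OF segment[OF that]]] E[OF w]
      norm_triangle_ineq4[of "E (w + of_real s * h) - E (z + of_real s * h)" "E w"]
      norm_triangle_ineq4[of "E (w + of_real s * h)" "E (z + of_real s * h)"]
    by simp
  then have mvt: "norm (\<phi> t - \<phi> 0 - t *\<^sub>R \<phi>' 0) \<le> \<bar>t\<bar> * (4 * e * \<bar>t\<bar>)"
    using vector_differentiable_bound_linearization[of "closed_segment 0 t" \<phi> \<phi>' 0 t 0] \<phi>'
    by simp
  have "\<phi>' 0 = of_real t * L k + E w"
    unfolding \<phi>'_def E_def w_def using linear_scale[OF L, of t k] by (simp add: scaleR_conv_of_real)
  then have "f (z + of_real t * k + of_real t * h) - f (z + of_real t * h) - f (z + of_real t * k) + f z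
           - of_real (t^2) * L k = (\<phi> t - \<phi> 0 - t *\<^sub>R \<phi>' 0) + of_real t * E w"
    by (simp add: \<phi>_def w_def scaleR_conv_of_real algebra_simps power2_eq_square)
  also have "norm \<dots> \<le> \<bar>t\<bar> * (4 * e * \<bar>t\<bar>) + \<bar>t\<bar> * (e * \<bar>t\<bar>)"
    using mvt E[OF w] by (intro norm_triangle_le add_mono) (auto simp: norm_mult mult_left_mono)
  also have "\<dots> = 5 * e * t^2" by (simp add: power2_eq_square algebra_simps)
  finally show ?thesis .
qed

lemma tendsto_second_difference:
  fixes f G L :: "complex \<Rightarrow> complex"
  assumes S: "open S" "z \<in> S" and h: "norm h = 1" and k: "norm k = 1"
    and Df: "\<And>w. w \<in> S \<Longrightarrow> (f has_derivative Df w) (at w) \<and> Df w h = G w"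
    and L: "(G has_derivative L) (at z)"
  shows "((\<lambda>t::real. (f (z + of_real t * k + of_real t * h) - f (z + of_real t * h)
            - f (z + of_real t * k) + f z) / of_real (t^2)) \<longlongrightarrow> L k) (at 0)"
proof -
  define \<Delta> where "\<Delta> t = f (z + of_real t * k + of_real t * h) - f (z + of_real t * h)
    - f (z + of_real t * k) + f z" for t :: real
  have "((\<lambda>t. \<Delta> t / of_real (t^2)) \<longlongrightarrow> L k) (at 0)"
  proof (rule tendstoI)
    fix \<epsilon> :: real assume "\<epsilon> > 0"
    define e where "e = \<epsilon> / 10"
    have "e > 0" using \<open>\<epsilon> > 0\<close> by (simp add: e_def)
    then obtain d1 where "d1 > 0"
      and d1: "\<And>y. norm (y - z) < d1 \<Longrightarrow> norm (G y - G z - L (y - z)) \<le> e * norm (y - z)"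
      using L unfolding has_derivative_at_alt by blast
    obtain d2 where "d2 > 0" and d2: "ball z d2 \<subseteq> S" using S open_contains_ball by blast
    show "\<forall>\<^sub>F t in at 0. dist (\<Delta> t / of_real (t^2)) (L k) < \<epsilon>"
      unfolding eventually_at
    proof (intro exI[of _ "min d1 d2 / 2"] conjI ballI impI)
      show "0 < min d1 d2 / 2" using \<open>d1 > 0\<close> \<open>d2 > 0\<close> by simp
      fix t :: real assume "t \<in> UNIV" and t: "t \<noteq> 0 \<and> dist t 0 < min d1 d2 / 2"
      have "norm (\<Delta> t - of_real (t^2) * L k) \<le> 5 * e * t^2"
        unfolding \<Delta>_def
      proof (rule second_difference_estimate[OF h k has_derivative_linear[OF L]])
        show "e \<ge> 0" using \<open>e > 0\<close> by simp
      next
        fix w assume "norm (w - z) \<le> 2 * \<bar>t\<bar>"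
        then have "w \<in> S" using t d2 by (auto simp: dist_norm norm_minus_commute)
        then show "(f has_derivative Df w) (at w) \<and> Df w h = G w" by (rule Df)
      next
        fix y assume "norm (y - z) \<le> 2 * \<bar>t\<bar>"
        then show "norm (G y - G z - L (y - z)) \<le> e * norm (y - z)" using d1 t by simp
      qed
      moreover have "dist (\<Delta> t / of_real (t^2)) (L k) = norm (\<Delta> t - of_real (t^2) * L k) / t^2"
      proof -
        have "\<Delta> t / of_real (t^2) - L k = (\<Delta> t - of_real (t^2) * L k) / of_real (t^2)"
          using t by (simp add: field_simps)
        moreover have "norm (of_real (t^2) :: complex) = t^2" by (simp add: norm_power)
        ultimately show ?thesis by (simp only: dist_norm norm_divide)
      qed
      ultimately have "dist (\<Delta> t / of_real (t^2)) (L k) \<le> 5 * e"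
        using t by (simp add: divide_le_eq)
      then show "dist (\<Delta> t / of_real (t^2)) (L k) < \<epsilon>"
        using \<open>\<epsilon> > 0\<close> by (simp add: e_def)
    qed
  qed
  then show ?thesis by (simp add: \<Delta>_def)
qed

lemma pdy_pdx_eq_pdx_pdy:
  assumes S: "open S" "z \<in> S" and f: "\<And>w. w \<in> S \<Longrightarrow> f differentiable (at w)"
    and "pdx f differentiable (at z)" "pdy f differentiable (at z)"
  shows "pdy (pdx f) z = pdx (pdy f) z"
proof -
  define Df where "Df w v = of_real (Re v) * pdx f w + of_real (Im v) * pdy f w" for w v
  have Df: "(f has_derivative Df w) (at w)" if "w \<in> S" for w
    unfolding Df_def[abs_def] using has_derivative_pdx_pdy[OF f[OF that]] .
  obtain Lx Ly where Lx: "(pdx f has_derivative Lx) (at z)" and Ly: "(pdy f has_derivative Ly) (at z)"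
    using assms(4,5) differentiable_def by blast
  define \<Delta> where "\<Delta> t = f (z + of_real t * \<i> + of_real t) - f (z + of_real t)
    - f (z + of_real t * \<i>) + f z" for t :: real
  have "((\<lambda>t::real. (f (z + of_real t * \<i> + of_real t * 1) - f (z + of_real t * 1)
          - f (z + of_real t * \<i>) + f z) / of_real (t^2)) \<longlongrightarrow> Lx \<i>) (at 0)"
    by (rule tendsto_second_difference[OF S, where Df=Df and G="pdx f"]) (simp_all add: Df_def Df Lx)
  then have "((\<lambda>t. \<Delta> t / of_real (t^2)) \<longlongrightarrow> Lx \<i>) (at 0)"
    by (simp add: \<Delta>_def)
  moreover have "((\<lambda>t::real. (f (z + of_real t * 1 + of_real t * \<i>) - f (z + of_real t * \<i>)
          - f (z + of_real t * 1) + f z) / of_real (t^2)) \<longlongrightarrow> Ly 1) (at 0)"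
    by (rule tendsto_second_difference[OF S, where Df=Df and G="pdy f"]) (simp_all add: Df_def Df Ly)
  then have "((\<lambda>t. \<Delta> t / of_real (t^2)) \<longlongrightarrow> Ly 1) (at 0)"
    by (simp add: \<Delta>_def algebra_simps)
  ultimately have "Lx \<i> = Ly 1" by (rule tendsto_unique[rotated]) simp
  then show ?thesis using has_derivative_imp_pdx_pdy[OF Lx] has_derivative_imp_pdx_pdy[OF Ly] by simp
qed

lemma holomorphic_wirtinger_harmonic:
  assumes "harmonic_on f S"
  shows "dz f holomorphic_on S" "(\<lambda>z. cnj (dzbar f z)) holomorphic_on S"
proof -
  have S: "open S"
    and dif: "\<And>z. z \<in> S \<Longrightarrow> f differentiable (at z) \<and> pdx f differentiable (at z) \<and> pdy f differentiable (at z)"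
    and lap: "\<And>z. z \<in> S \<Longrightarrow> pdx (pdx f) z + pdy (pdy f) z = 0"
    using assms unfolding harmonic_on_def by auto
  have "((\<lambda>z. pdx f z - \<i> * pdy f z) has_field_derivative a - \<i> * b) (at z) \<and>
        ((\<lambda>z. cnj (pdx f z + \<i> * pdy f z)) has_field_derivative cnj (a + \<i> * b)) (at z)"
    if z: "z \<in> S" and a: "a = pdx (pdx f) z" and b: "b = pdx (pdy f) z" for z a b
  proof -
    obtain Lx Ly where Lx: "(pdx f has_derivative Lx) (at z)" and Ly: "(pdy f has_derivative Ly) (at z)"
      using dif[OF z] differentiable_def by blast
    have "pdy (pdx f) z = b"
      unfolding b by (rule pdy_pdx_eq_pdx_pdy[OF S z]) (use dif z in auto)
    then have "Lx 1 = a" "Lx \<i> = b"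
      using has_derivative_imp_pdx_pdy[OF Lx] a by simp_all
    moreover have "Ly 1 = b" "Ly \<i> = - a"
      using has_derivative_imp_pdx_pdy[OF Ly] lap[OF z] a b by (simp_all add: eq_neg_iff_add_eq_0 add.commute)
    ultimately have Lxy: "Lx v = of_real (Re v) * a + of_real (Im v) * b"
      "Ly v = of_real (Re v) * b - of_real (Im v) * a" for v
      using linear_complex_eq[OF has_derivative_linear[OF Lx], of v]
        linear_complex_eq[OF has_derivative_linear[OF Ly], of v] by simp_all
    have eq: "(\<lambda>v. Lx v - \<i> * Ly v) = (*) (a - \<i> * b)"
      "(\<lambda>v. cnj (Lx v + \<i> * Ly v)) = (*) (cnj (a + \<i> * b))"
      by (simp_all add: Lxy fun_eq_iff complex_eq_iff algebra_simps)
    have "((\<lambda>z. pdx f z - \<i> * pdy f z) has_derivative (\<lambda>v. Lx v - \<i> * Ly v)) (at z)"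
      by (intro has_derivative_diff has_derivative_mult_right Lx Ly)
    moreover have "((\<lambda>z. cnj (pdx f z + \<i> * pdy f z)) has_derivative (\<lambda>v. cnj (Lx v + \<i> * Ly v))) (at z)"
      by (intro bounded_linear.has_derivative[OF bounded_linear_cnj] derivative_intros Lx Ly)
    ultimately show ?thesis
      unfolding has_field_derivative_def eq ..
  qed
  then have "(\<lambda>z. pdx f z - \<i> * pdy f z) holomorphic_on S" "(\<lambda>z. cnj (pdx f z + \<i> * pdy f z)) holomorphic_on S"
    using S by (auto simp: holomorphic_on_open)
  then show "dz f holomorphic_on S" "(\<lambda>z. cnj (dzbar f z)) holomorphic_on S"
    unfolding dz_def[abs_def] dzbar_def[abs_def] complex_cnj_divide
    by (auto intro: holomorphic_on_divide[OF _ holomorphic_on_const])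
qed

lemma has_derivative_log_norm:
  assumes "z \<noteq> c"
  shows "((\<lambda>w. 2 * A * of_real (ln (cmod (w - c)))) has_derivative
           (\<lambda>v. A / (z - c) * v + A / cnj (z - c) * cnj v)) (at z)"
proof -
  define u where "u = z - c"
  have u: "u \<noteq> 0" using assms by (simp add: u_def)
  have "((\<lambda>w. w - c) has_derivative (\<lambda>v. v)) (at z)" by (intro derivative_eq_intros) auto
  from has_derivative_compose[OF this has_derivative_norm[of "z - c"]]
  have "((\<lambda>w. norm (w - c)) has_derivative (\<lambda>v. v \<bullet> sgn u)) (at z)"
    using u by (simp add: u_def)
  from DERIV_compose_FDERIV[OF DERIV_ln this]
  have "((\<lambda>w. 2 * A * of_real (ln (cmod (w - c)))) has_derivative
          (\<lambda>v. 2 * A * of_real (v \<bullet> sgn u * inverse (norm u)))) (at z)"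
    using u by (intro derivative_intros) (simp add: u_def)
  moreover have "2 * A * of_real (v \<bullet> sgn u * inverse (norm u)) = A / u * v + A / cnj u * cnj v" for v
  proof -
    have "norm u * norm u = Re u * Re u + Im u * Im u"
      by (metis cmod_power2 power2_eq_square)
    then have Re: "v \<bullet> sgn u * inverse (norm u) = Re (v / u)"
      using u by (simp add: Re_divide inner_complex_def sgn_div_norm power2_eq_square field_simps)
    have "A / u * v + A / cnj u * cnj v = A * (v / u + cnj (v / u))"
      by (simp add: algebra_simps)
    also have "v / u + cnj (v / u) = of_real (2 * Re (v / u))" by (rule complex_add_cnj)
    finally show ?thesis using Re by simp
  qed
  ultimately show ?thesis by (simp add: u_def)
qed

lemma wirtinger_local_form:
  assumes U: "open U" "z \<in> U" "z \<noteq> c"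
    and f: "\<And>w. w \<in> U \<Longrightarrow> f w = h1 w + cnj (h2 w) + 2 * A * of_real (ln (cmod (w - c)))"
    and h1: "h1 holomorphic_on U" and h2: "h2 holomorphic_on U"
  shows "dz f z = deriv h1 z + A / (z - c)" "cnj (dzbar f z) = deriv h2 z + cnj A / (z - c)"
proof -
  have "(h1 has_derivative (\<lambda>v. deriv h1 z * v)) (at z)" "(h2 has_derivative (\<lambda>v. deriv h2 z * v)) (at z)"
    using holomorphic_derivI[OF h1 U(1,2)] holomorphic_derivI[OF h2 U(1,2)]
    by (simp_all add: has_field_derivative_def)
  then have "((\<lambda>w. h1 w + cnj (h2 w) + 2 * A * of_real (ln (cmod (w - c)))) has_derivative
      (\<lambda>v. deriv h1 z * v + cnj (deriv h2 z * v) + (A / (z - c) * v + A / cnj (z - c) * cnj v))) (at z)"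
    by (intro has_derivative_add bounded_linear.has_derivative[OF bounded_linear_cnj]
        has_derivative_log_norm U(3))
  also have "(\<lambda>v. deriv h1 z * v + cnj (deriv h2 z * v) + (A / (z - c) * v + A / cnj (z - c) * cnj v))
      = (\<lambda>v. (deriv h1 z + A / (z - c)) * v + (cnj (deriv h2 z) + A / cnj (z - c)) * cnj v)"
    by (simp add: fun_eq_iff algebra_simps)
  finally have "(f has_derivative (\<lambda>v. (deriv h1 z + A / (z - c)) * v
      + (cnj (deriv h2 z) + A / cnj (z - c)) * cnj v)) (at z)"
    by (rule has_derivative_transform_within_open[OF _ U(1,2)]) (simp add: f)
  from wirtinger_eqI[OF this] show "dz f z = deriv h1 z + A / (z - c)"
    "cnj (dzbar f z) = deriv h2 z + cnj A / (z - c)"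
    by simp_all
qed

section \<open>Rational functions\<close>

lemma rational_with_poles_in_mono:
  assumes "rational_with_poles_in r Z ip" "Z \<subseteq> Z'" "ip \<longrightarrow> ip'"
  shows "rational_with_poles_in r Z' ip'"
  using assms unfolding rational_with_poles_in_def by blast

lemma rational_with_poles_in_const: "rational_with_poles_in (\<lambda>_. c) Z ip"
  unfolding rational_with_poles_in_def by (rule exI[of _ "[:c:]"], rule exI[of _ 1]) auto

lemma rational_with_poles_in_add:
  assumes "rational_with_poles_in r Z ip" "rational_with_poles_in s Z ip"
  shows "rational_with_poles_in (\<lambda>z. r z + s z) Z ip"
proof -
  obtain p1 q1 where 1: "q1 \<noteq> 0" "\<forall>z. poly q1 z = 0 \<longrightarrow> z \<in> Z" "\<not> ip \<longrightarrow> degree p1 \<le> degree q1"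
      "\<forall>z. z \<notin> Z \<longrightarrow> r z = poly p1 z / poly q1 z"
    using assms(1) unfolding rational_with_poles_in_def by blast
  obtain p2 q2 where 2: "q2 \<noteq> 0" "\<forall>z. poly q2 z = 0 \<longrightarrow> z \<in> Z" "\<not> ip \<longrightarrow> degree p2 \<le> degree q2"
      "\<forall>z. z \<notin> Z \<longrightarrow> s z = poly p2 z / poly q2 z"
    using assms(2) unfolding rational_with_poles_in_def by blast
  have "\<not> ip \<longrightarrow> degree (p1 * q2 + p2 * q1) \<le> degree (q1 * q2)"
  proof
    assume "\<not> ip"
    then have "degree (p1 * q2) \<le> degree q1 + degree q2" "degree (p2 * q1) \<le> degree q1 + degree q2"
      using 1 2 degree_mult_le[of p1 q2] degree_mult_le[of p2 q1] by linarith+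
    then show "degree (p1 * q2 + p2 * q1) \<le> degree (q1 * q2)"
      using 1 2 degree_add_le by (simp add: degree_mult_eq)
  qed
  moreover have "r z + s z = poly (p1 * q2 + p2 * q1) z / poly (q1 * q2) z" if "z \<notin> Z" for z
  proof -
    have "poly q1 z \<noteq> 0" "poly q2 z \<noteq> 0" using 1 2 that by auto
    then show ?thesis using 1 2 that by (simp add: field_simps)
  qed
  ultimately show ?thesis
    unfolding rational_with_poles_in_def using 1 2
    by (rule_tac exI[of _ "p1 * q2 + p2 * q1"], rule_tac exI[of _ "q1 * q2"]) auto
qed

lemma rational_with_poles_in_sum:
  assumes "finite I" "\<And>i. i \<in> I \<Longrightarrow> rational_with_poles_in (r i) Z ip"
  shows "rational_with_poles_in (\<lambda>z. \<Sum>i\<in>I. r i z) Z ip"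
  using assms
proof (induction I rule: finite_induct)
  case empty
  then show ?case using rational_with_poles_in_const[of 0] by simp
next
  case (insert i I)
  then show ?case by (simp add: rational_with_poles_in_add)
qed

lemma rational_with_poles_in_polynomial:
  assumes "finite F"
  shows "rational_with_poles_in (\<lambda>z. \<Sum>n\<in>F. c n * z ^ n) Z True"
proof (rule rational_with_poles_in_sum[OF assms])
  fix n
  show "rational_with_poles_in (\<lambda>z. c n * z ^ n) Z True"
    unfolding rational_with_poles_in_def
    by (rule exI[of _ "monom (c n) n"], rule exI[of _ 1]) (auto simp: poly_monom)
qed

lemma rational_with_poles_in_empty_constant:
  assumes "rational_with_poles_in g {} False"
  obtains c where "\<And>z. g z = c"
proof -
  obtain p q where "q \<noteq> 0" and roots: "\<And>z. poly q z \<noteq> 0" and deg: "degree p \<le> degree q"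
    and g: "\<And>z. g z = poly p z / poly q z"
    using assms unfolding rational_with_poles_in_def by auto
  have "degree q = 0"
  proof (rule ccontr)
    assume "degree q \<noteq> 0"
    then have "coeff q 0 = 0 \<or> (\<exists>i\<in>{1..degree q}. coeff q i \<noteq> 0)"
      using \<open>q \<noteq> 0\<close> by (intro disjI2 bexI[of _ "degree q"]) auto
    then obtain z where "(\<Sum>i\<le>degree q. coeff q i * z ^ i) = 0"
      by (rule fundamental_theorem_of_algebra)
    then show False using roots[of z] by (simp add: poly_altdef)
  qed
  moreover have "degree p = 0" using deg calculation by simp
  moreover have "poly r z = coeff r 0" if "degree r = 0" for r :: "complex poly" and z
  proof -
    have "poly r z = poly [:coeff r 0:] z" by (simp only: degree_0_id[OF that])
    then show ?thesis by simp
  qed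
  ultimately have "g z = coeff p 0 / coeff q 0" for z using g by simp
  then show thesis by (rule that)
qed

section \<open>Laurent expansions with finite principal part\<close>

definition principal_part :: "nat set \<Rightarrow> (nat \<Rightarrow> complex) \<Rightarrow> complex \<Rightarrow> complex \<Rightarrow> complex" where
  "principal_part F a c z = (\<Sum>n\<in>F. a n * (1 / (z - c)) ^ n)"

lemma rational_with_poles_in_principal_part:
  assumes "finite F" "c \<in> Z"
  shows "rational_with_poles_in (principal_part F a c) Z ip"
  unfolding principal_part_def
proof (rule rational_with_poles_in_sum[OF assms(1)])
  fix n
  have eq: "a n * (1 / (z - c)) ^ n = poly [:a n:] z / poly ([:- c, 1:] ^ n) z" if "z \<notin> Z" for z
  proof -
    have "z \<noteq> c" using that assms(2) by auto
    then show ?thesis by (simp add: poly_power power_one_over divide_inverse power_inverse)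
  qed
  show "rational_with_poles_in (\<lambda>z. a n * (1 / (z - c)) ^ n) Z ip"
    unfolding rational_with_poles_in_def
    by (rule exI[of _ "[:a n:]"], rule exI[of _ "[:- c, 1:] ^ n"])
       (use assms(2) eq in \<open>auto simp: poly_power\<close>)
qed

lemma holomorphic_principal_part: "principal_part F a c holomorphic_on - {c}"
  unfolding principal_part_def by (intro holomorphic_intros) auto

lemma tendsto_const_divide_at_infinity: "((\<lambda>z. \<alpha> / (z - c)) \<longlongrightarrow> 0) at_infinity" for c :: complex
proof (rule tendsto_divide_0[OF tendsto_const])
  have "filterlim (\<lambda>z. - c + z) at_infinity at_infinity"
    by (rule tendsto_add_filterlim_at_infinity[OF tendsto_const filterlim_ident])
  then show "filterlim (\<lambda>z. z - c) at_infinity at_infinity" by simp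
qed

lemma tendsto_deriv_compose_inverse_at_infinity:
  assumes H: "H holomorphic_on ball 0 \<rho>" and "\<rho> > 0"
  shows "(deriv (\<lambda>w. H (1 / (w - c))) \<longlongrightarrow> 0) at_infinity"
proof -
  have "\<forall>\<^sub>F z in at_infinity. z \<noteq> c"
    unfolding eventually_at_infinity by (intro exI[of _ "norm c + 1"]) auto
  moreover have "\<forall>\<^sub>F z in at_infinity. 1 / (z - c) \<in> ball 0 \<rho>"
    using tendsto_const_divide_at_infinity[of 1 c] \<open>\<rho> > 0\<close>
    by (auto simp: tendsto_iff dist_norm)
  ultimately have "\<forall>\<^sub>F z in at_infinity. z \<noteq> c \<and> 1 / (z - c) \<in> ball 0 \<rho>"
    by (rule eventually_conj)
  moreover have "deriv H (1 / (z - c)) * (- ((1 / (z - c))^2)) = deriv (\<lambda>w. H (1 / (w - c))) z"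
    if "z \<noteq> c \<and> 1 / (z - c) \<in> ball 0 \<rho>" for z
  proof -
    have "((\<lambda>w. 1 / (w - c)) has_field_derivative (- ((1 / (z - c))^2))) (at z)"
      using that by (auto intro!: derivative_eq_intros simp: power2_eq_square divide_simps)
    from DERIV_chain'[OF this holomorphic_derivI[OF H open_ball]]
    show ?thesis using that by (auto dest: DERIV_imp_deriv)
  qed
  ultimately have "\<forall>\<^sub>F z in at_infinity.
      deriv H (1 / (z - c)) * (- ((1 / (z - c))^2)) = deriv (\<lambda>w. H (1 / (w - c))) z"
    by (rule eventually_mono)
  moreover have "isCont (deriv H) 0"
    using holomorphic_on_imp_continuous_on[OF holomorphic_deriv[OF H open_ball]] \<open>\<rho> > 0\<close>
    by (simp add: continuous_on_eq_continuous_at)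
  then have "((\<lambda>z. deriv H (1 / (z - c)) * (- ((1 / (z - c))^2))) \<longlongrightarrow> deriv H 0 * (- (0^2))) at_infinity"
    by (intro tendsto_intros isCont_tendsto_compose[of _ "deriv H"] tendsto_const_divide_at_infinity)
  ultimately show ?thesis by (simp add: tendsto_cong)
qed

lemma tendsto_deriv_principal_part: "(deriv (principal_part F a c) \<longlongrightarrow> 0) at_infinity"
proof -
  have "principal_part F a c = (\<lambda>w. (\<lambda>u. \<Sum>n\<in>F. a n * u ^ n) (1 / (w - c)))"
    by (simp add: principal_part_def fun_eq_iff)
  then show ?thesis
    by (simp only:) (rule tendsto_deriv_compose_inverse_at_infinity[of _ 1]; auto intro!: holomorphic_intros)
qed

lemma finite_negative_support:
  assumes "finite {k. k < 0 \<and> a k \<noteq> 0}"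
  shows "finite {n::nat. 0 < n \<and> a (- int n) \<noteq> 0}"
proof (rule finite_subset[OF _ finite_vimageI[OF assms, of "\<lambda>n. - int n"]])
  show "{n. 0 < n \<and> a (- int n) \<noteq> 0} \<subseteq> (\<lambda>n. - int n) -` {k. k < 0 \<and> a k \<noteq> 0}" by auto
qed (auto simp: inj_on_def)

lemma laurent_finite_principal_part:
  fixes a :: "int \<Rightarrow> complex"
  assumes fin: "finite {k. k < 0 \<and> a k \<noteq> 0}"
    and sm: "\<And>w. 0 < norm w \<Longrightarrow> norm w < r \<Longrightarrow> (\<lambda>k. a k * w powi k) summable_on UNIV"
  obtains P where "P holomorphic_on ball 0 r"
    "\<And>w. 0 < norm w \<Longrightarrow> norm w < r \<Longrightarrow>
       (\<Sum>\<^sub>\<infinity>k. a k * w powi k) = principal_part {n. 0 < n \<and> a (- int n) \<noteq> 0} (\<lambda>n. a (- int n)) 0 w + P w"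
proof -
  define F where "F = {n::nat. 0 < n \<and> a (- int n) \<noteq> 0}"
  define P where "P w = (\<Sum>n. a (int n) * w ^ n)" for w
  have nonneg: "(\<lambda>n. a (int n) * w ^ n) sums (\<Sum>\<^sub>\<infinity>k\<in>range int. a k * w powi k)"
    if "0 < norm w" "norm w < r" for w
  proof -
    have "(\<lambda>k. a k * w powi k) summable_on range int"
      using summable_on_subset_banach[OF sm[OF that]] by simp
    then have "(((\<lambda>k. a k * w powi k) \<circ> int) has_sum (\<Sum>\<^sub>\<infinity>k\<in>range int. a k * w powi k)) UNIV"
      by (metis has_sum_infsum has_sum_reindex inj_of_nat)
    then show ?thesis by (intro has_sum_imp_sums) (simp add: o_def)
  qed
  have "summable (\<lambda>n. a (int n) * w ^ n)" if "norm w < r" for w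
  proof (cases "w = 0")
    case True
    then show ?thesis by (intro summable_finite[of "{0}"]) auto
  next
    case False
    then show ?thesis using nonneg[of w] that by (auto simp: sums_iff)
  qed
  then have "P holomorphic_on ball 0 r"
    unfolding P_def[abs_def] holomorphic_on_open[OF open_ball]
    using termdiffs_strong' by (metis mem_ball_0)
  moreover have "(\<Sum>\<^sub>\<infinity>k. a k * w powi k) = principal_part F (\<lambda>n. a (- int n)) 0 w + P w"
    if w: "0 < norm w" "norm w < r" for w
  proof -
    define g where "g k = a k * w powi k" for k
    have neg: "{k. k < 0 \<and> a k \<noteq> 0} = (\<lambda>n. - int n) ` F"
      by (auto simp: F_def image_iff intro!: exI[of _ "nat (- _)"])
    have "UNIV = {k::int. k < 0} \<union> range int"
      by (auto simp: image_iff) (metis nonneg_eq_int not_less)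
    moreover have "g summable_on A" for A
      using summable_on_subset_banach[OF sm[OF w]] by (simp add: g_def[abs_def])
    ultimately have "infsum g UNIV = infsum g {k. k < 0} + infsum g (range int)"
      by (metis infsum_Un_disjoint disjoint_iff mem_Collect_eq rangeE of_nat_less_0_iff)
    also have "infsum g {k. k < 0} = infsum g ((\<lambda>n. - int n) ` F)"
      by (rule infsum_cong_neutral) (use neg in \<open>auto simp: g_def\<close>)
    also have "\<dots> = principal_part F (\<lambda>n. a (- int n)) 0 w"
      using finite_negative_support[OF fin]
      by (simp add: F_def[symmetric] sum.reindex inj_on_def principal_part_def g_def
          power_int_minus power_one_over power_inverse divide_inverse)
    also have "infsum g (range int) = P w"
      using nonneg[OF w] by (simp add: P_def g_def[abs_def] sums_iff)
    finally show ?thesis by (simp add: g_def[abs_def])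
  qed
  ultimately show thesis using that F_def by blast
qed

lemma finite_principal_parts_at_local_form:
  assumes "finite_principal_parts_at f c"
  obtains \<rho> Fa ca Pa Fb cb Pb A where "\<rho> > 0" "finite Fa" "finite Fb"
    "Pa holomorphic_on ball c \<rho>" "Pb holomorphic_on ball c \<rho>"
    "\<And>z. z \<in> ball c \<rho> - {c} \<Longrightarrow> f z = principal_part Fa ca c z + Pa z
        + cnj (principal_part Fb cb c z + Pb z) + 2 * A * of_real (ln (cmod (z - c)))"
proof -
  obtain r a b A where "r > 0" and fa: "finite {k. k < 0 \<and> a k \<noteq> 0}" and fb: "finite {k. k < 0 \<and> b k \<noteq> 0}"
    and expansion: "\<forall>z. 0 < dist z c \<and> dist z c < r \<longrightarrow>
            (\<lambda>k. a k * (z - c) powi k) summable_on UNIV \<and>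
            (\<lambda>k. b k * (z - c) powi k) summable_on UNIV \<and>
            f z = (\<Sum>\<^sub>\<infinity>k. a k * (z - c) powi k) + cnj (\<Sum>\<^sub>\<infinity>k. b k * (z - c) powi k)
                  + 2 * A * of_real (ln (cmod (z - c)))"
    using assms unfolding finite_principal_parts_at_def by blast
  have "0 < dist (c + w) c \<and> dist (c + w) c < r" if "0 < norm w" "norm w < r" for w
    using that by (simp add: dist_norm)
  then have sa: "(\<lambda>k. a k * w powi k) summable_on UNIV"
    and sb: "(\<lambda>k. b k * w powi k) summable_on UNIV" if "0 < norm w" "norm w < r" for w
    using expansion that by force+
  obtain Pa where Pa: "Pa holomorphic_on ball 0 r" and ea: "\<And>w. 0 < norm w \<Longrightarrow> norm w < r \<Longrightarrow>
      (\<Sum>\<^sub>\<infinity>k. a k * w powi k) = principal_part {n. 0 < n \<and> a (- int n) \<noteq> 0} (\<lambda>n. a (- int n)) 0 w + Pa w"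
    using laurent_finite_principal_part[OF fa sa] by blast
  obtain Pb where Pb: "Pb holomorphic_on ball 0 r" and eb: "\<And>w. 0 < norm w \<Longrightarrow> norm w < r \<Longrightarrow>
      (\<Sum>\<^sub>\<infinity>k. b k * w powi k) = principal_part {n. 0 < n \<and> b (- int n) \<noteq> 0} (\<lambda>n. b (- int n)) 0 w + Pb w"
    using laurent_finite_principal_part[OF fb sb] by blast
  have shift: "(\<lambda>z. P (z - c)) holomorphic_on ball c r" if "P holomorphic_on ball 0 r" for P
  proof -
    have "(P \<circ> (\<lambda>z. z - c)) holomorphic_on ball c r"
      by (rule holomorphic_on_compose_gen[OF _ that])
         (auto intro!: holomorphic_intros simp: dist_norm norm_minus_commute)
    then show ?thesis by (simp add: o_def)
  qed
  show thesis
  proof (rule that[OF \<open>r > 0\<close> finite_negative_support[OF fa] finite_negative_support[OF fb]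
        shift[OF Pa] shift[OF Pb]])
    fix z assume "z \<in> ball c r - {c}"
    then have z: "0 < dist z c \<and> dist z c < r" and w: "0 < norm (z - c)" "norm (z - c) < r"
      by (auto simp: dist_norm norm_minus_commute)
    show "f z = principal_part {n. 0 < n \<and> a (- int n) \<noteq> 0} (\<lambda>n. a (- int n)) c z + Pa (z - c)
        + cnj (principal_part {n. 0 < n \<and> b (- int n) \<noteq> 0} (\<lambda>n. b (- int n)) c z + Pb (z - c))
        + 2 * A * of_real (ln (cmod (z - c)))"
      using expansion[rule_format, OF z] ea[OF w] eb[OF w] by (simp add: principal_part_def)
  qed
qed

lemma finite_principal_parts_at_wirtinger:
  assumes "finite_principal_parts_at f c"
  obtains Ta Tb A where
    "rational_with_poles_in Ta {c} False" "rational_with_poles_in Tb {c} False"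
    "Ta holomorphic_on - {c}" "Tb holomorphic_on - {c}"
    "(deriv Ta \<longlongrightarrow> 0) at_infinity" "(deriv Tb \<longlongrightarrow> 0) at_infinity"
    "\<exists>l. ((\<lambda>z. dz f z - deriv Ta z - A / (z - c)) \<longlongrightarrow> l) (at c)"
    "\<exists>l. ((\<lambda>z. cnj (dzbar f z) - deriv Tb z - cnj A / (z - c)) \<longlongrightarrow> l) (at c)"
proof -
  obtain \<rho> Fa ca Pa Fb cb Pb A where "\<rho> > 0" "finite Fa" "finite Fb"
    and Pa: "Pa holomorphic_on ball c \<rho>" and Pb: "Pb holomorphic_on ball c \<rho>"
    and f: "\<And>z. z \<in> ball c \<rho> - {c} \<Longrightarrow> f z = principal_part Fa ca c z + Pa z
        + cnj (principal_part Fb cb c z + Pb z) + 2 * A * of_real (ln (cmod (z - c)))"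
    by (rule finite_principal_parts_at_local_form[OF assms], rule that)
  define Ta Tb where "Ta = principal_part Fa ca c" and "Tb = principal_part Fb cb c"
  have "open (ball c \<rho> - {c})" by auto
  have hol: "Ta holomorphic_on - {c}" "Tb holomorphic_on - {c}"
    unfolding Ta_def Tb_def by (rule holomorphic_principal_part)+
  have "\<forall>\<^sub>F z in at c. z \<in> ball c \<rho> - {c}"
    using eventually_at_in_open[of "ball c \<rho>" c] \<open>\<rho> > 0\<close> by simp
  moreover have "dz f z - deriv Ta z - A / (z - c) = deriv Pa z"
    and "cnj (dzbar f z) - deriv Tb z - cnj A / (z - c) = deriv Pb z"
    if z: "z \<in> ball c \<rho> - {c}" for z
  proof -
    have "(\<lambda>w. Ta w + Pa w) holomorphic_on ball c \<rho> - {c}" "(\<lambda>w. Tb w + Pb w) holomorphic_on ball c \<rho> - {c}"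
      using hol Pa Pb by (auto intro!: holomorphic_intros elim: holomorphic_on_subset)
    note local = wirtinger_local_form[OF \<open>open (ball c \<rho> - {c})\<close> z _ f[unfolded Ta_def[symmetric] Tb_def[symmetric]] this]
    have "Ta field_differentiable at z" "Tb field_differentiable at z"
      using hol z by (auto intro: holomorphic_on_imp_differentiable_at[OF _ open_Compl])
    moreover have "Pa field_differentiable at z" "Pb field_differentiable at z"
      using Pa Pb z by (auto intro: holomorphic_on_imp_differentiable_at[OF _ open_ball])
    ultimately show "dz f z - deriv Ta z - A / (z - c) = deriv Pa z"
      and "cnj (dzbar f z) - deriv Tb z - cnj A / (z - c) = deriv Pb z"
      using local z by (simp_all add: deriv_add)
  qed
  moreover have "isCont (deriv Pa) c" "isCont (deriv Pb) c"
    using holomorphic_on_imp_continuous_on[OF holomorphic_deriv[OF Pa open_ball]]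
      holomorphic_on_imp_continuous_on[OF holomorphic_deriv[OF Pb open_ball]] \<open>\<rho> > 0\<close>
    by (simp_all add: continuous_on_eq_continuous_at)
  ultimately have "((\<lambda>z. dz f z - deriv Ta z - A / (z - c)) \<longlongrightarrow> deriv Pa c) (at c)"
    "((\<lambda>z. cnj (dzbar f z) - deriv Tb z - cnj A / (z - c)) \<longlongrightarrow> deriv Pb c) (at c)"
    by (auto simp: isCont_def intro: tendsto_cong[THEN iffD2] elim!: eventually_mono)
  then show thesis
    using that[of Ta Tb A] hol tendsto_deriv_principal_part
      rational_with_poles_in_principal_part[OF \<open>finite Fa\<close>] rational_with_poles_in_principal_part[OF \<open>finite Fb\<close>]
    unfolding Ta_def Tb_def by blast
qed

section \<open>Behaviour at infinity\<close>

lemma holomorphic_on_compose_inverse: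
  assumes H: "H holomorphic_on T" and U: "\<And>w. w \<in> U \<Longrightarrow> w \<noteq> c \<and> 1 / (w - c) \<in> T"
  shows "(\<lambda>w. H (1 / (w - c))) holomorphic_on U"
proof -
  have "(H \<circ> (\<lambda>w. 1 / (w - c))) holomorphic_on U"
    by (rule holomorphic_on_compose_gen[OF _ H]) (use U in \<open>auto intro!: holomorphic_intros\<close>)
  then show ?thesis by (simp add: o_def)
qed

lemma powi_series_reflect:
  fixes d :: "int \<Rightarrow> complex"
  shows "(\<lambda>k. d k * z powi k) summable_on UNIV \<longleftrightarrow> (\<lambda>k. d (- k) * (1 / z) powi k) summable_on UNIV"
    and "(\<Sum>\<^sub>\<infinity>k. d k * z powi k) = (\<Sum>\<^sub>\<infinity>k. d (- k) * (1 / z) powi k)"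
proof -
  have "bij_betw uminus (UNIV :: int set) UNIV" using bij_uminus by (simp add: bij_def)
  moreover have "(\<lambda>k. d (- k) * (1 / z) powi k) = (\<lambda>k. d (- k) * z powi (- k))"
    by (simp add: fun_eq_iff power_int_minus power_int_inverse flip: inverse_eq_divide)
  ultimately show "(\<lambda>k. d k * z powi k) summable_on UNIV \<longleftrightarrow> (\<lambda>k. d (- k) * (1 / z) powi k) summable_on UNIV"
    and "(\<Sum>\<^sub>\<infinity>k. d k * z powi k) = (\<Sum>\<^sub>\<infinity>k. d (- k) * (1 / z) powi k)"
    using summable_on_reindex_bij_betw[of uminus UNIV UNIV "\<lambda>k. d k * z powi k"]
      infsum_reindex_bij_betw[of uminus UNIV UNIV "\<lambda>k. d k * z powi k"] by simp_all
qed

(* The substitution w = 1 / z turns the expansion at infinity into a Laurent series at 0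
   with finitely many negative powers. *)
lemma finite_principal_parts_at_infinity_local_form:
  assumes "finite_principal_parts_at_infinity f"
  obtains R Fa ca Wa Fb cb Wb A where "R > 0" "finite Fa" "finite Fb"
    "Wa holomorphic_on ball 0 (1 / R)" "Wb holomorphic_on ball 0 (1 / R)"
    "\<And>z. R < norm z \<Longrightarrow> f z = (\<Sum>n\<in>Fa. ca n * z ^ n) + Wa (1 / z)
        + cnj ((\<Sum>n\<in>Fb. cb n * z ^ n) + Wb (1 / z)) + 2 * A * of_real (ln (cmod z))"
proof -
  obtain R a b A where "R > 0" and fa: "finite {k. k > 0 \<and> a k \<noteq> 0}" and fb: "finite {k. k > 0 \<and> b k \<noteq> 0}"
    and expansion: "\<forall>z. norm z > R \<longrightarrow>
            (\<lambda>k. a k * z powi k) summable_on UNIV \<and>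
            (\<lambda>k. b k * z powi k) summable_on UNIV \<and>
            f z = (\<Sum>\<^sub>\<infinity>k. a k * z powi k) + cnj (\<Sum>\<^sub>\<infinity>k. b k * z powi k)
                  + 2 * A * of_real (ln (cmod z))"
    using assms unfolding finite_principal_parts_at_infinity_def by blast
  have reflected: "finite {k. k < 0 \<and> d (- k) \<noteq> 0}" if "finite {k. k > 0 \<and> d k \<noteq> 0}" for d :: "int \<Rightarrow> complex"
    using finite_vimageI[OF that, of uminus] by (simp add: vimage_def)
  have "R < norm (1 / w)" if "0 < norm w" "norm w < 1 / R" for w :: complex
    using that \<open>R > 0\<close> by (simp add: norm_divide field_simps)
  then have sa: "(\<lambda>k. a (- k) * w powi k) summable_on UNIV"
    and sb: "(\<lambda>k. b (- k) * w powi k) summable_on UNIV" if "0 < norm w" "norm w < 1 / R" for w :: complex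
    using expansion that powi_series_reflect(1)[of _ "1 / w"] by force+
  obtain Wa where Wa: "Wa holomorphic_on ball 0 (1 / R)" and ea: "\<And>w. 0 < norm w \<Longrightarrow> norm w < 1 / R \<Longrightarrow>
      (\<Sum>\<^sub>\<infinity>k. a (- k) * w powi k) = principal_part {n. 0 < n \<and> a (- (- int n)) \<noteq> 0} (\<lambda>n. a (- (- int n))) 0 w + Wa w"
    using laurent_finite_principal_part[OF reflected[OF fa] sa] by blast
  obtain Wb where Wb: "Wb holomorphic_on ball 0 (1 / R)" and eb: "\<And>w. 0 < norm w \<Longrightarrow> norm w < 1 / R \<Longrightarrow>
      (\<Sum>\<^sub>\<infinity>k. b (- k) * w powi k) = principal_part {n. 0 < n \<and> b (- (- int n)) \<noteq> 0} (\<lambda>n. b (- (- int n))) 0 w + Wb w"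
    using laurent_finite_principal_part[OF reflected[OF fb] sb] by blast
  show thesis
  proof (rule that[OF \<open>R > 0\<close> _ _ Wa Wb])
    show "finite {n. 0 < n \<and> a (int n) \<noteq> 0}" "finite {n. 0 < n \<and> b (int n) \<noteq> 0}"
      using finite_negative_support[OF reflected[OF fa]] finite_negative_support[OF reflected[OF fb]]
      by simp_all
    fix z :: complex assume z: "R < norm z"
    then have "z \<noteq> 0" using \<open>R > 0\<close> by auto
    then have w: "0 < norm (1 / z)" "norm (1 / z) < 1 / R" using z \<open>R > 0\<close> by (simp_all add: norm_divide field_simps)
    show "f z = (\<Sum>n | 0 < n \<and> a (int n) \<noteq> 0. a (int n) * z ^ n) + Wa (1 / z)
        + cnj ((\<Sum>n | 0 < n \<and> b (int n) \<noteq> 0. b (int n) * z ^ n) + Wb (1 / z)) + 2 * A * of_real (ln (cmod z))"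
    proof -
      have "f z = (\<Sum>\<^sub>\<infinity>k. a (- k) * (1 / z) powi k) + cnj (\<Sum>\<^sub>\<infinity>k. b (- k) * (1 / z) powi k)
          + 2 * A * of_real (ln (cmod z))"
        using expansion[rule_format, OF z] unfolding powi_series_reflect(2)[of a z] powi_series_reflect(2)[of b z]
        by blast
      then show ?thesis
        unfolding ea[OF w] eb[OF w] by (simp add: principal_part_def)
    qed
  qed
qed

lemma finite_principal_parts_at_infinity_wirtinger:
  assumes "finite_principal_parts_at_infinity f"
  obtains Qa Qb where "rational_with_poles_in Qa {} True" "rational_with_poles_in Qb {} True"
    "Qa holomorphic_on UNIV" "Qb holomorphic_on UNIV"
    "((\<lambda>z. dz f z - deriv Qa z) \<longlongrightarrow> 0) at_infinity"
    "((\<lambda>z. cnj (dzbar f z) - deriv Qb z) \<longlongrightarrow> 0) at_infinity"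
proof -
  obtain R Fa ca Wa Fb cb Wb A where "R > 0" "finite Fa" "finite Fb"
    and Wa: "Wa holomorphic_on ball 0 (1 / R)" and Wb: "Wb holomorphic_on ball 0 (1 / R)"
    and f: "\<And>z. R < norm z \<Longrightarrow> f z = (\<Sum>n\<in>Fa. ca n * z ^ n) + Wa (1 / z)
        + cnj ((\<Sum>n\<in>Fb. cb n * z ^ n) + Wb (1 / z)) + 2 * A * of_real (ln (cmod z))"
    by (rule finite_principal_parts_at_infinity_local_form[OF assms], rule that)
  define Qa Qb where "Qa z = (\<Sum>n\<in>Fa. ca n * z ^ n)" and "Qb z = (\<Sum>n\<in>Fb. cb n * z ^ n)" for z
  have Q: "Qa holomorphic_on UNIV" "Qb holomorphic_on UNIV"
    unfolding Qa_def Qb_def by (auto intro!: holomorphic_intros)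
  define U where "U = - cball (0::complex) R"
  have U: "open U" "\<And>w. w \<in> U \<Longrightarrow> w \<noteq> 0 \<and> 1 / (w - 0) \<in> ball 0 (1 / R)"
    using \<open>R > 0\<close> by (auto simp: U_def norm_divide divide_less_eq)
  have W: "(\<lambda>w. Wa (1 / (w - 0))) holomorphic_on U" "(\<lambda>w. Wb (1 / (w - 0))) holomorphic_on U"
    using holomorphic_on_compose_inverse[OF Wa U(2)] holomorphic_on_compose_inverse[OF Wb U(2)] by auto
  have "dz f z - deriv Qa z = deriv (\<lambda>w. Wa (1 / (w - 0))) z + A / (z - 0)"
    and "cnj (dzbar f z) - deriv Qb z = deriv (\<lambda>w. Wb (1 / (w - 0))) z + cnj A / (z - 0)"
    if z: "z \<in> U" for z
  proof -
    have hol: "(\<lambda>w. Qa w + Wa (1 / (w - 0))) holomorphic_on U" "(\<lambda>w. Qb w + Wb (1 / (w - 0))) holomorphic_on U"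
      using Q W by (auto intro!: holomorphic_intros elim: holomorphic_on_subset)
    have "f w = (Qa w + Wa (1 / (w - 0))) + cnj (Qb w + Wb (1 / (w - 0)))
        + 2 * A * of_real (ln (cmod (w - 0)))" if "w \<in> U" for w
      using f[of w] that by (simp add: U_def Qa_def Qb_def)
    from wirtinger_local_form[OF U(1) z _ this hol] U(2)[OF z]
    have "dz f z = deriv (\<lambda>w. Qa w + Wa (1 / (w - 0))) z + A / (z - 0)"
      "cnj (dzbar f z) = deriv (\<lambda>w. Qb w + Wb (1 / (w - 0))) z + cnj A / (z - 0)"
      by blast+
    moreover have "Qa field_differentiable at z" "Qb field_differentiable at z"
      using Q by (auto intro: holomorphic_on_imp_differentiable_at)
    moreover have "(\<lambda>w. Wa (1 / (w - 0))) field_differentiable at z" "(\<lambda>w. Wb (1 / (w - 0))) field_differentiable at z"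
      using W z U(1) by (auto intro: holomorphic_on_imp_differentiable_at)
    ultimately show "dz f z - deriv Qa z = deriv (\<lambda>w. Wa (1 / (w - 0))) z + A / (z - 0)"
      and "cnj (dzbar f z) - deriv Qb z = deriv (\<lambda>w. Wb (1 / (w - 0))) z + cnj A / (z - 0)"
      by (simp_all add: deriv_add)
  qed
  moreover have "\<forall>\<^sub>F z in at_infinity. z \<in> U"
    unfolding eventually_at_infinity U_def by (intro exI[of _ "R + 1"]) auto
  ultimately have "\<forall>\<^sub>F z in at_infinity. deriv (\<lambda>w. Wa (1 / (w - 0))) z + A / (z - 0) = dz f z - deriv Qa z"
    "\<forall>\<^sub>F z in at_infinity. deriv (\<lambda>w. Wb (1 / (w - 0))) z + cnj A / (z - 0) = cnj (dzbar f z) - deriv Qb z"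
    by (auto elim!: eventually_mono)
  moreover have "((\<lambda>z. deriv (\<lambda>w. Wa (1 / (w - 0))) z + A / (z - 0)) \<longlongrightarrow> 0 + 0) at_infinity"
    "((\<lambda>z. deriv (\<lambda>w. Wb (1 / (w - 0))) z + cnj A / (z - 0)) \<longlongrightarrow> 0 + 0) at_infinity"
    using \<open>R > 0\<close> by (intro tendsto_add tendsto_deriv_compose_inverse_at_infinity[OF Wa]
        tendsto_deriv_compose_inverse_at_infinity[OF Wb] tendsto_const_divide_at_infinity; simp)+
  ultimately have "((\<lambda>z. dz f z - deriv Qa z) \<longlongrightarrow> 0) at_infinity"
    "((\<lambda>z. cnj (dzbar f z) - deriv Qb z) \<longlongrightarrow> 0) at_infinity"
    by (simp_all add: tendsto_cong)
  moreover have "rational_with_poles_in Qa {} True" "rational_with_poles_in Qb {} True"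
    unfolding Qa_def[abs_def] Qb_def[abs_def] using \<open>finite Fa\<close> \<open>finite Fb\<close>
    by (auto intro: rational_with_poles_in_polynomial)
  ultimately show thesis using that Q by blast
qed

lemma wirtinger_compose_inverse:
  assumes U: "open U" "z \<in> U" "0 \<notin> U" and g: "g differentiable (at (1 / z))"
    and f: "\<And>w. w \<in> U \<Longrightarrow> f w = g (1 / w)"
  shows "dz f z = dz g (1 / z) * (- ((1 / z)^2))" "dzbar f z = dzbar g (1 / z) * cnj (- ((1 / z)^2))"
proof -
  have "z \<noteq> 0" using U by auto
  then have "((\<lambda>w. 1 / w) has_derivative (\<lambda>v. - ((1 / z)^2) * v)) (at z)"
    by (auto intro!: derivative_eq_intros simp: power2_eq_square field_simps)
  from has_derivative_compose[OF this has_derivative_wirtinger[OF g]]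
  have "((\<lambda>w. g (1 / w)) has_derivative (\<lambda>v. (dz g (1 / z) * (- ((1 / z)^2))) * v
      + (dzbar g (1 / z) * cnj (- ((1 / z)^2))) * cnj v)) (at z)"
    by (simp add: algebra_simps)
  then have "(f has_derivative (\<lambda>v. (dz g (1 / z) * (- ((1 / z)^2))) * v
      + (dzbar g (1 / z) * cnj (- ((1 / z)^2))) * cnj v)) (at z)"
    by (rule has_derivative_transform_within_open[OF _ U(1,2)]) (simp add: f)
  then show "dz f z = dz g (1 / z) * (- ((1 / z)^2))" "dzbar f z = dzbar g (1 / z) * cnj (- ((1 / z)^2))"
    by (rule wirtinger_eqI)+
qed

lemma tendsto_wirtinger_harmonic_at_infinity:
  assumes "harmonic_at_infinity f"
  shows "(dz f \<longlongrightarrow> 0) at_infinity" "(dzbar f \<longlongrightarrow> 0) at_infinity"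
proof -
  obtain e g where "e > 0" and g: "harmonic_on g (ball 0 e)"
    and fg: "\<forall>w. 0 < norm w \<and> norm w < e \<longrightarrow> g w = f (1 / w)"
    using assms unfolding harmonic_at_infinity_def by blast
  have dg: "g differentiable (at w) \<and> pdx g differentiable (at w) \<and> pdy g differentiable (at w)"
    if "w \<in> ball 0 e" for w
    using g that unfolding harmonic_on_def by blast
  define U where "U = - cball (0::complex) (1 / e)"
  have U: "open U" "\<And>w. w \<in> U \<Longrightarrow> w \<noteq> 0 \<and> 1 / w \<in> ball 0 e"
    using \<open>e > 0\<close> by (auto simp: U_def norm_divide field_simps divide_less_eq mult.commute)
  have fg_U: "f w = g (1 / w)" if "w \<in> U" for w
    using that fg U(2) by (auto simp: norm_divide)
  have "dz f z = dz g (1 / z) * (- ((1 / z)^2)) \<and> dzbar f z = dzbar g (1 / z) * cnj (- ((1 / z)^2))"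
    if z: "z \<in> U" for z
  proof -
    have "0 \<notin> U" "g differentiable (at (1 / z))" using U(2) z dg by auto
    from wirtinger_compose_inverse[OF U(1) z this fg_U] show ?thesis ..
  qed
  moreover have "\<forall>\<^sub>F z in at_infinity. z \<in> U"
    unfolding eventually_at_infinity U_def by (intro exI[of _ "1 / e + 1"]) auto
  ultimately have "\<forall>\<^sub>F z in at_infinity. dz g (1 / z) * (- ((1 / z)^2)) = dz f z"
    "\<forall>\<^sub>F z in at_infinity. dzbar g (1 / z) * cnj (- ((1 / z)^2)) = dzbar f z"
    by (auto elim!: eventually_mono)
  moreover have "((\<lambda>z. dz g (1 / z) * (- ((1 / z)^2))) \<longlongrightarrow> dz g 0 * 0) at_infinity"
    "((\<lambda>z. dzbar g (1 / z) * cnj (- ((1 / z)^2))) \<longlongrightarrow> dzbar g 0 * cnj 0) at_infinity"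
  proof -
    have "isCont (dz g) 0" "isCont (dzbar g) 0"
      using dg[of 0] \<open>e > 0\<close> unfolding dz_def[abs_def] dzbar_def[abs_def]
      by (auto intro!: continuous_intros differentiable_imp_continuous_within
          simp: continuous_at_imp_continuous_within)
    moreover have inv: "((\<lambda>z::complex. 1 / z) \<longlongrightarrow> 0) at_infinity"
      using tendsto_const_divide_at_infinity[of 1 0] by simp
    ultimately have "((\<lambda>z. dz g (1 / z)) \<longlongrightarrow> dz g 0) at_infinity"
      "((\<lambda>z. dzbar g (1 / z)) \<longlongrightarrow> dzbar g 0) at_infinity"
      by (auto intro: isCont_tendsto_compose)
    moreover have sq: "((\<lambda>z::complex. - ((1 / z)^2)) \<longlongrightarrow> 0) at_infinity"
      using tendsto_minus[OF tendsto_power[OF inv, of 2]] by simp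
    ultimately show "((\<lambda>z. dz g (1 / z) * (- ((1 / z)^2))) \<longlongrightarrow> dz g 0 * 0) at_infinity"
      "((\<lambda>z. dzbar g (1 / z) * cnj (- ((1 / z)^2))) \<longlongrightarrow> dzbar g 0 * cnj 0) at_infinity"
      using tendsto_mult tendsto_cnj[OF sq] by fastforce+
  qed
  ultimately show "(dz f \<longlongrightarrow> 0) at_infinity" "(dzbar f \<longlongrightarrow> 0) at_infinity"
    by (simp_all add: tendsto_cong)
qed

section \<open>Partial fractions\<close>

lemma Liouville_removable_singularities:
  assumes Z: "finite Z" and G: "G holomorphic_on - Z"
    and removable: "\<And>j. j \<in> Z \<Longrightarrow> \<exists>l. (G \<longlongrightarrow> l) (at j)"
    and G0: "(G \<longlongrightarrow> 0) at_infinity" and "z \<notin> Z"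
  shows "G z = 0"
proof -
  define G' where "G' w = (if w \<in> Z then Lim (at w) G else G w)" for w
  have near: "\<forall>\<^sub>F w in F. G' w = G w" if "\<forall>\<^sub>F w in F. w \<notin> Z" for F
    using that by (rule eventually_mono) (simp add: G'_def)
  have "(G' \<longlongrightarrow> G' j) (at j)" if j: "j \<in> Z" for j
  proof -
    obtain l where l: "(G \<longlongrightarrow> l) (at j)" using removable[OF j] by blast
    then have "G' j = l" using j by (simp add: G'_def tendsto_Lim)
    moreover have "\<forall>\<^sub>F w in at j. G' w = G w"
      using islimpt_finite[OF Z, of j] by (intro near) (simp add: islimpt_iff_eventually)
    ultimately show ?thesis using l by (simp add: tendsto_cong)
  qed
  moreover have "G' holomorphic_on UNIV - Z"
    by (rule holomorphic_transform[of G]) (use G in \<open>auto simp: G'_def Compl_eq_Diff_UNIV\<close>)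
  ultimately have "G' holomorphic_on UNIV"
    by (intro no_isolated_singularity'[OF _ _ open_UNIV Z]) auto
  moreover have "(G' \<longlongrightarrow> 0) at_infinity"
  proof -
    obtain B where "\<forall>j\<in>Z. norm j \<le> B" using finite_imp_bounded[OF Z] bounded_iff by blast
    then have "\<forall>\<^sub>F w in at_infinity. w \<notin> Z"
      unfolding eventually_at_infinity by (intro exI[of _ "B + 1"]) force
    then show ?thesis using tendsto_cong[OF near] G0 by blast
  qed
  ultimately have "G' z = 0" by (rule Liouville_weak_0)
  then show ?thesis using \<open>z \<notin> Z\<close> by (simp add: G'_def)
qed

lemma partial_fraction_expansion:
  fixes \<Gamma> Q :: "complex \<Rightarrow> complex" and T :: "complex \<Rightarrow> complex \<Rightarrow> complex"
  assumes Z: "finite Z" and \<Gamma>: "\<Gamma> holomorphic_on - Z"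
    and T: "\<And>j. j \<in> Z \<Longrightarrow> T j holomorphic_on - {j}"
    and T_infinity: "\<And>j. j \<in> Z \<Longrightarrow> (deriv (T j) \<longlongrightarrow> 0) at_infinity"
    and poles: "\<And>j. j \<in> Z \<Longrightarrow> \<exists>l. ((\<lambda>z. \<Gamma> z - deriv (T j) z - \<alpha> j / (z - j)) \<longlongrightarrow> l) (at j)"
    and Q: "Q holomorphic_on UNIV" and Q_infinity: "((\<lambda>z. \<Gamma> z - deriv Q z) \<longlongrightarrow> 0) at_infinity"
    and "z \<notin> Z"
  shows "\<Gamma> z = (\<Sum>j\<in>Z. deriv (T j) z + \<alpha> j / (z - j)) + deriv Q z"
proof -
  define S where "S I z = (\<Sum>j\<in>I. deriv (T j) z + \<alpha> j / (z - j))" for I z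
  have S: "S I holomorphic_on - I" if "I \<subseteq> Z" for I
    unfolding S_def
  proof (intro holomorphic_on_sum holomorphic_on_add)
    fix j assume "j \<in> I"
    then have "deriv (T j) holomorphic_on - {j}"
      using holomorphic_deriv[OF T open_Compl[OF closed_singleton]] that by auto
    then show "deriv (T j) holomorphic_on - I"
      by (rule holomorphic_on_subset) (use \<open>j \<in> I\<close> in auto)
    show "(\<lambda>z. \<alpha> j / (z - j)) holomorphic_on - I"
      using \<open>j \<in> I\<close> by (intro holomorphic_intros) auto
  qed
  have Q': "deriv Q holomorphic_on UNIV" by (rule holomorphic_deriv[OF Q open_UNIV])
  define E where "E z = \<Gamma> z - S Z z - deriv Q z" for z
  have "E holomorphic_on - Z"
    unfolding E_def by (intro holomorphic_on_diff \<Gamma> S holomorphic_on_subset[OF Q']) auto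
  moreover have "\<exists>l. (E \<longlongrightarrow> l) (at j)" if j: "j \<in> Z" for j
  proof -
    obtain l where l: "((\<lambda>z. \<Gamma> z - deriv (T j) z - \<alpha> j / (z - j)) \<longlongrightarrow> l) (at j)"
      using poles[OF j] by blast
    have "(\<lambda>z. S (Z - {j}) z + deriv Q z) holomorphic_on - (Z - {j})"
      by (intro holomorphic_on_add S holomorphic_on_subset[OF Q']) auto
    moreover have "open (- (Z - {j}))" by (intro open_Compl finite_imp_closed) (use Z in auto)
    ultimately have "isCont (\<lambda>z. S (Z - {j}) z + deriv Q z) j"
      by (meson ComplI Diff_iff holomorphic_on_imp_continuous_on continuous_on_eq_continuous_at singletonI)
    then have "((\<lambda>z. (\<Gamma> z - deriv (T j) z - \<alpha> j / (z - j)) - (S (Z - {j}) z + deriv Q z))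
        \<longlongrightarrow> l - (S (Z - {j}) j + deriv Q j)) (at j)"
      using l by (intro tendsto_diff) (auto simp: isCont_def)
    moreover have "S Z z = (deriv (T j) z + \<alpha> j / (z - j)) + S (Z - {j}) z" for z
      unfolding S_def by (rule sum.remove[OF Z j])
    then have "E = (\<lambda>z. (\<Gamma> z - deriv (T j) z - \<alpha> j / (z - j)) - (S (Z - {j}) z + deriv Q z))"
      by (simp add: fun_eq_iff E_def algebra_simps)
    ultimately show ?thesis by auto
  qed
  moreover have "(E \<longlongrightarrow> 0) at_infinity"
  proof -
    have "(S Z \<longlongrightarrow> 0) at_infinity"
      unfolding S_def using T_infinity
      by (intro tendsto_null_sum) (auto intro: tendsto_add_zero tendsto_const_divide_at_infinity)
    then have "((\<lambda>z. (\<Gamma> z - deriv Q z) - S Z z) \<longlongrightarrow> 0 - 0) at_infinity"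
      by (intro tendsto_diff Q_infinity)
    then show ?thesis by (simp add: E_def[abs_def] algebra_simps)
  qed
  ultimately have "E z = 0" using Liouville_removable_singularities[OF Z] \<open>z \<notin> Z\<close> by blast
  then show ?thesis by (simp add: E_def S_def diff_eq_eq add.commute)
qed

lemma eq_from_wirtinger_derivatives:
  assumes U: "open U" "connected U" and Z: "Z \<inter> U = {}"
    and f: "\<And>z. z \<in> U \<Longrightarrow> f differentiable (at z)"
    and R: "\<And>z. z \<in> U \<Longrightarrow> (R has_field_derivative R' z) (at z)"
    and S: "\<And>z. z \<in> U \<Longrightarrow> (S has_field_derivative S' z) (at z)"
    and dz: "\<And>z. z \<in> U \<Longrightarrow> dz f z = R' z + (\<Sum>j\<in>Z. A j / (z - j))"
    and dzbar: "\<And>z. z \<in> U \<Longrightarrow> cnj (dzbar f z) = S' z + (\<Sum>j\<in>Z. cnj (A j) / (z - j))"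
  obtains c where "\<And>z. z \<in> U \<Longrightarrow> f z = R z + c + cnj (S z) + (\<Sum>j\<in>Z. 2 * A j * of_real (ln (cmod (z - j))))"
proof -
  define L where "L z = (\<Sum>j\<in>Z. 2 * A j * of_real (ln (cmod (z - j))))" for z
  define \<Phi> where "\<Phi> z = f z - R z - cnj (S z) - L z" for z
  have \<Phi>: "(\<Phi> has_derivative (\<lambda>v. 0)) (at z)" if z: "z \<in> U" for z
  proof -
    have "(L has_derivative (\<lambda>v. \<Sum>j\<in>Z. A j / (z - j) * v + A j / cnj (z - j) * cnj v)) (at z)"
      unfolding L_def using Z z by (intro has_derivative_sum has_derivative_log_norm) auto
    also have "(\<lambda>v. \<Sum>j\<in>Z. A j / (z - j) * v + A j / cnj (z - j) * cnj v)
        = (\<lambda>v. (\<Sum>j\<in>Z. A j / (z - j)) * v + (\<Sum>j\<in>Z. A j / cnj (z - j)) * cnj v)"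
      by (simp add: fun_eq_iff sum.distrib sum_distrib_right)
    finally have "(\<Phi> has_derivative (\<lambda>v. (dz f z * v + dzbar f z * cnj v) - R' z * v - cnj (S' z * v)
        - ((\<Sum>j\<in>Z. A j / (z - j)) * v + (\<Sum>j\<in>Z. A j / cnj (z - j)) * cnj v))) (at z)"
      unfolding \<Phi>_def[abs_def]
      using has_derivative_wirtinger[OF f[OF z]] R[OF z] S[OF z]
      by (intro has_derivative_diff bounded_linear.has_derivative[OF bounded_linear_cnj])
         (auto simp: has_field_derivative_def)
    also have "dzbar f z = cnj (S' z) + (\<Sum>j\<in>Z. A j / cnj (z - j))"
      using arg_cong[OF dzbar[OF z], of cnj] by (simp add: cnj_sum)
    finally show ?thesis by (simp add: dz[OF z] algebra_simps)
  qed
  have "\<Phi> constant_on U"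
  proof (rule has_derivative_zero_connected_constant_on[OF U(2,1) finite.emptyI])
    show "continuous_on U \<Phi>"
      using \<Phi> has_derivative_continuous by (blast intro: continuous_at_imp_continuous_on)
    show "\<forall>z\<in>U - {}. (\<Phi> has_derivative (\<lambda>h. 0)) (at z within U)"
      using \<Phi> has_derivative_at_withinI by blast
  qed
  then obtain c where "\<And>z. z \<in> U \<Longrightarrow> \<Phi> z = c" unfolding constant_on_def by blast
  then show thesis by (intro that[of c]) (simp add: \<Phi>_def L_def algebra_simps)
qed

lemma wirtinger_at_infinity:
  assumes "\<not> ip \<longrightarrow> harmonic_at_infinity f" "ip \<longrightarrow> finite_principal_parts_at_infinity f"
  obtains Qa Qb where "rational_with_poles_in Qa {} ip" "rational_with_poles_in Qb {} ip"
    "Qa holomorphic_on UNIV" "Qb holomorphic_on UNIV"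
    "((\<lambda>z. dz f z - deriv Qa z) \<longlongrightarrow> 0) at_infinity"
    "((\<lambda>z. cnj (dzbar f z) - deriv Qb z) \<longlongrightarrow> 0) at_infinity"
proof (cases ip)
  case True
  with assms(2) have "finite_principal_parts_at_infinity f" by simp
  then show thesis
  proof (rule finite_principal_parts_at_infinity_wirtinger)
    fix Qa Qb
    assume "rational_with_poles_in Qa {} True" "rational_with_poles_in Qb {} True"
      "Qa holomorphic_on UNIV" "Qb holomorphic_on UNIV"
      "((\<lambda>z. dz f z - deriv Qa z) \<longlongrightarrow> 0) at_infinity"
      "((\<lambda>z. cnj (dzbar f z) - deriv Qb z) \<longlongrightarrow> 0) at_infinity"
    then show thesis using True by (intro that[of Qa Qb]) simp_all
  qed
next
  case False
  with assms(1) have "harmonic_at_infinity f" by simp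
  from tendsto_wirtinger_harmonic_at_infinity[OF this]
  have "((\<lambda>z. dz f z - deriv (\<lambda>_. 0) z) \<longlongrightarrow> 0) at_infinity"
    "((\<lambda>z. cnj (dzbar f z) - deriv (\<lambda>_. 0) z) \<longlongrightarrow> 0) at_infinity"
    using tendsto_cnj[of "dzbar f" 0 at_infinity] by simp_all
  then show thesis
    using that[of "\<lambda>_. 0" "\<lambda>_. 0"] rational_with_poles_in_const[of 0] by simp
qed

lemma wirtinger_at_poles:
  assumes "\<And>j. j \<in> Z \<Longrightarrow> finite_principal_parts_at f j"
  shows "\<exists>Ta Tb A. \<forall>j\<in>Z.
    rational_with_poles_in (Ta j) {j} False \<and> rational_with_poles_in (Tb j) {j} False \<and>
    Ta j holomorphic_on - {j} \<and> Tb j holomorphic_on - {j} \<and>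
    (deriv (Ta j) \<longlongrightarrow> 0) at_infinity \<and> (deriv (Tb j) \<longlongrightarrow> 0) at_infinity \<and>
    (\<exists>l. ((\<lambda>z. dz f z - deriv (Ta j) z - A j / (z - j)) \<longlongrightarrow> l) (at j)) \<and>
    (\<exists>l. ((\<lambda>z. cnj (dzbar f z) - deriv (Tb j) z - cnj (A j) / (z - j)) \<longlongrightarrow> l) (at j))"
proof -
  define pole_data where "pole_data j Ta Tb A \<longleftrightarrow>
      rational_with_poles_in Ta {j} False \<and> rational_with_poles_in Tb {j} False \<and>
      Ta holomorphic_on - {j} \<and> Tb holomorphic_on - {j} \<and>
      (deriv Ta \<longlongrightarrow> 0) at_infinity \<and> (deriv Tb \<longlongrightarrow> 0) at_infinity \<and>
      (\<exists>l. ((\<lambda>z. dz f z - deriv Ta z - A / (z - j)) \<longlongrightarrow> l) (at j)) \<and>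
      (\<exists>l. ((\<lambda>z. cnj (dzbar f z) - deriv Tb z - cnj A / (z - j)) \<longlongrightarrow> l) (at j))" for j Ta Tb A
  have "\<forall>j\<in>Z. \<exists>Ta Tb A. pole_data j Ta Tb A"
    unfolding pole_data_def
    by (intro ballI) (erule finite_principal_parts_at_wirtinger[OF assms], blast)
  then have "\<exists>Ta Tb A. \<forall>j\<in>Z. pole_data j (Ta j) (Tb j) (A j)" by metis
  then show ?thesis by (simp only: pole_data_def)
qed

lemma rational_with_poles_in_sum_poles:
  assumes "finite Z" and T: "\<And>j. j \<in> Z \<Longrightarrow> rational_with_poles_in (T j) {j} False"
    and Q: "rational_with_poles_in Q {} ip"
  shows "rational_with_poles_in (\<lambda>z. (\<Sum>j\<in>Z. T j z) + Q z) Z ip"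
proof (rule rational_with_poles_in_add)
  show "rational_with_poles_in (\<lambda>z. \<Sum>j\<in>Z. T j z) Z ip"
    by (rule rational_with_poles_in_sum[OF assms(1)], rule rational_with_poles_in_mono[OF T]) auto
  show "rational_with_poles_in Q Z ip" using Q by (rule rational_with_poles_in_mono) auto
qed

lemma has_field_derivative_sum_poles:
  assumes T: "\<And>j. j \<in> Z \<Longrightarrow> T j holomorphic_on - {j}" and Q: "Q holomorphic_on UNIV" and "z \<notin> Z"
  shows "((\<lambda>w. (\<Sum>j\<in>Z. T j w) + Q w) has_field_derivative (\<Sum>j\<in>Z. deriv (T j) z) + deriv Q z) (at z)"
proof -
  have "(T j has_field_derivative deriv (T j) z) (at z)" if "j \<in> Z" for j
  proof -
    have "z \<in> - {j}" using that \<open>z \<notin> Z\<close> by auto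
    then show ?thesis by (rule holomorphic_derivI[OF T[OF that] open_Compl[OF closed_singleton]])
  qed
  moreover have "(Q has_field_derivative deriv Q z) (at z)"
    using holomorphic_derivI[OF Q open_UNIV] by auto
  ultimately show ?thesis by (auto intro!: DERIV_add DERIV_sum)
qed

lemma harmonic_decomposition:
  assumes Z: "finite Z" and f: "harmonic_on f (- Z)"
    and poles: "\<And>j. j \<in> Z \<Longrightarrow> finite_principal_parts_at f j"
    and infinity: "\<not> ip \<longrightarrow> harmonic_at_infinity f" "ip \<longrightarrow> finite_principal_parts_at_infinity f"
  obtains r s A where "rational_with_poles_in r Z ip" "rational_with_poles_in s Z ip"
    "\<And>z. z \<notin> Z \<Longrightarrow> f z = r z + cnj (s z) + (\<Sum>j\<in>Z. 2 * A j * of_real (ln (cmod (z - j))))"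
proof -
  obtain Ta Tb A where "\<forall>j\<in>Z.
    rational_with_poles_in (Ta j) {j} False \<and> rational_with_poles_in (Tb j) {j} False \<and>
    Ta j holomorphic_on - {j} \<and> Tb j holomorphic_on - {j} \<and>
    (deriv (Ta j) \<longlongrightarrow> 0) at_infinity \<and> (deriv (Tb j) \<longlongrightarrow> 0) at_infinity \<and>
    (\<exists>l. ((\<lambda>z. dz f z - deriv (Ta j) z - A j / (z - j)) \<longlongrightarrow> l) (at j)) \<and>
    (\<exists>l. ((\<lambda>z. cnj (dzbar f z) - deriv (Tb j) z - cnj (A j) / (z - j)) \<longlongrightarrow> l) (at j))"
    using wirtinger_at_poles[OF poles] by blast
  then have rat_T: "\<And>j. j \<in> Z \<Longrightarrow> rational_with_poles_in (Ta j) {j} False"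
      "\<And>j. j \<in> Z \<Longrightarrow> rational_with_poles_in (Tb j) {j} False"
    and T: "\<And>j. j \<in> Z \<Longrightarrow> Ta j holomorphic_on - {j}" "\<And>j. j \<in> Z \<Longrightarrow> Tb j holomorphic_on - {j}"
    and T_infinity: "\<And>j. j \<in> Z \<Longrightarrow> (deriv (Ta j) \<longlongrightarrow> 0) at_infinity"
      "\<And>j. j \<in> Z \<Longrightarrow> (deriv (Tb j) \<longlongrightarrow> 0) at_infinity"
    and T_poles: "\<And>j. j \<in> Z \<Longrightarrow> \<exists>l. ((\<lambda>z. dz f z - deriv (Ta j) z - A j / (z - j)) \<longlongrightarrow> l) (at j)"
      "\<And>j. j \<in> Z \<Longrightarrow> \<exists>l. ((\<lambda>z. cnj (dzbar f z) - deriv (Tb j) z - cnj (A j) / (z - j)) \<longlongrightarrow> l) (at j)"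
    by blast+
  obtain Qa Qb where rat_Q: "rational_with_poles_in Qa {} ip" "rational_with_poles_in Qb {} ip"
    and Q: "Qa holomorphic_on UNIV" "Qb holomorphic_on UNIV"
    and Q_infinity: "((\<lambda>z. dz f z - deriv Qa z) \<longlongrightarrow> 0) at_infinity"
      "((\<lambda>z. cnj (dzbar f z) - deriv Qb z) \<longlongrightarrow> 0) at_infinity"
    using wirtinger_at_infinity[OF infinity] by blast
  define R S where "R z = (\<Sum>j\<in>Z. Ta j z) + Qa z" and "S z = (\<Sum>j\<in>Z. Tb j z) + Qb z" for z
  have U: "open (- Z)" "connected (- Z)" "Z \<inter> - Z = {}"
    using Z path_connected_complement_countable[of Z]
    by (simp_all add: finite_imp_closed open_Compl countable_finite path_connected_imp_connected)
  have df: "f differentiable (at z)" if "z \<in> - Z" for z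
    using f that unfolding harmonic_on_def by blast
  have R': "(R has_field_derivative (\<Sum>j\<in>Z. deriv (Ta j) z) + deriv Qa z) (at z)"
    and S': "(S has_field_derivative (\<Sum>j\<in>Z. deriv (Tb j) z) + deriv Qb z) (at z)" if "z \<in> - Z" for z
    unfolding R_def[abs_def] S_def[abs_def] using that
    by (auto intro!: has_field_derivative_sum_poles T Q)
  have dz_eq: "dz f z = ((\<Sum>j\<in>Z. deriv (Ta j) z) + deriv Qa z) + (\<Sum>j\<in>Z. A j / (z - j))"
    and dzbar_eq: "cnj (dzbar f z) = ((\<Sum>j\<in>Z. deriv (Tb j) z) + deriv Qb z) + (\<Sum>j\<in>Z. cnj (A j) / (z - j))"
    if "z \<in> - Z" for z
    using partial_fraction_expansion[OF Z holomorphic_wirtinger_harmonic(1)[OF f] T(1) T_infinity(1) T_poles(1) Q(1) Q_infinity(1)]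
      partial_fraction_expansion[OF Z holomorphic_wirtinger_harmonic(2)[OF f] T(2) T_infinity(2) T_poles(2) Q(2) Q_infinity(2)]
      that by (simp_all add: sum.distrib)
  obtain c where c: "\<And>z. z \<in> - Z \<Longrightarrow>
      f z = R z + c + cnj (S z) + (\<Sum>j\<in>Z. 2 * A j * of_real (ln (cmod (z - j))))"
    using eq_from_wirtinger_derivatives[OF U df R' S' dz_eq dzbar_eq] by blast
  have "rational_with_poles_in (\<lambda>z. R z + c) Z ip"
    unfolding R_def using rational_with_poles_in_add[OF rational_with_poles_in_sum_poles[OF Z rat_T(1) rat_Q(1)]
      rational_with_poles_in_const] .
  moreover have "rational_with_poles_in S Z ip"
    unfolding S_def[abs_def] using rational_with_poles_in_sum_poles[OF Z rat_T(2) rat_Q(2)] .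
  ultimately show thesis by (rule that) (simp add: c)
qed

theorem proposition2p1:
  shows "(\<forall>(Z :: complex set) (inf_pole :: bool) (f :: complex \<Rightarrow> complex).
            finite Z \<and> harmonic_on f (- Z) \<and>
            (\<not> inf_pole \<longrightarrow> harmonic_at_infinity f) \<and>
            (\<forall>zj\<in>Z. filterlim f at_infinity (at zj) \<and> finite_principal_parts_at f zj) \<and>
            (inf_pole \<longrightarrow> filterlim f at_infinity at_infinity \<and> finite_principal_parts_at_infinity f)
          \<longrightarrow> (\<exists>r s (A :: complex \<Rightarrow> complex) (Ainf :: complex).
                 rational_with_poles_in r Z inf_pole \<and> rational_with_poles_in s Z inf_pole \<and>
                 (\<forall>z. z \<notin> Z \<longrightarrow>
                    f z = r z + cnj (s z) + (\<Sum>zj\<in>Z. 2 * A zj * of_real (ln (cmod (z - zj))))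
                          + (if inf_pole then 2 * Ainf * of_real (ln (cmod z)) else 0))))
        \<and> (\<forall>f :: complex \<Rightarrow> complex. harmonic_on f UNIV \<and> harmonic_at_infinity f \<longrightarrow>
             (\<exists>c. \<forall>z. f z = c))"
proof (intro conjI allI impI)
  fix Z ip and f :: "complex \<Rightarrow> complex"
  assume "finite Z \<and> harmonic_on f (- Z) \<and> (\<not> ip \<longrightarrow> harmonic_at_infinity f) \<and>
    (\<forall>zj\<in>Z. filterlim f at_infinity (at zj) \<and> finite_principal_parts_at f zj) \<and>
    (ip \<longrightarrow> filterlim f at_infinity at_infinity \<and> finite_principal_parts_at_infinity f)"
  then obtain r s A where "rational_with_poles_in r Z ip" "rational_with_poles_in s Z ip"
    "\<And>z. z \<notin> Z \<Longrightarrow> f z = r z + cnj (s z) + (\<Sum>j\<in>Z. 2 * A j * of_real (ln (cmod (z - j))))"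
    using harmonic_decomposition[of Z f ip] by blast
  \<comment> \<open>No logarithmic term at infinity is needed: near infinity the finite logarithmic terms
     already behave like 2 (\<Sum>j. A j) log |z|.\<close>
  then show "\<exists>r s A Ainf. rational_with_poles_in r Z ip \<and> rational_with_poles_in s Z ip \<and>
      (\<forall>z. z \<notin> Z \<longrightarrow> f z = r z + cnj (s z) + (\<Sum>zj\<in>Z. 2 * A zj * of_real (ln (cmod (z - zj))))
        + (if ip then 2 * Ainf * of_real (ln (cmod z)) else 0))"
    by (intro exI[of _ r] exI[of _ s] exI[of _ A] exI[of _ 0]) simp
next
  fix f :: "complex \<Rightarrow> complex"
  assume "harmonic_on f UNIV \<and> harmonic_at_infinity f"
  then obtain r s where "rational_with_poles_in r {} False" "rational_with_poles_in s {} False"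
    and f: "\<And>z. f z = r z + cnj (s z)"
    using harmonic_decomposition[of "{}" f False] by auto
  then obtain a b where "\<And>z. r z = a" "\<And>z. s z = b"
    by (metis rational_with_poles_in_empty_constant)
  then show "\<exists>c. \<forall>z. f z = c" using f by auto
qed

end
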